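(* Let $C$ be a linear code of length $n$ over $R$. Then \[ SLWE_{C^\perp}(X_0,X_1,\dots,X_{16})=\frac{1}{|C|}\,SLWE_C(B_0,B_1,\dots,B_{16}), \] where for $0\le k\le 16$, $B_k=\sum_{j=0}^{16}K_j(k)X_j$ and $K_j(k)$ is the coefficient of $Y^j$ in $(1+Y)^{16-k}(1-Y)^k$. (For instance $B_0=\sum_{j}\binom{16}{j}X_j$, $B_8=X_0-8X_2+28X_4-56X_6+70X_8-56X_{10}+28X_{12}-8X_{14}+X_{16}$, $B_{16}=\sum_j(-1)^j\binom{16}{j}X_j$.)
   Context: $R=\mathbb{Z}_4[u,v,w]/\langle u^2-u,v^2-v,w^2-w\rangle$. With $\eta_1=(1-u)(1-v)(1-w)$, $\eta_2=u(1-v)(1-w)$, $\eta_3=(1-u)v(1-w)$, $\eta_4=(1-u)(1-v)w$, $\eta_5=uv(1-w)$, $\eta_6=u(1-v)w$, $\eta_7=(1-u)vw$, $\eta_8=uvw$, every $r\in R$ is uniquely $r=\sum_{i=1}^8 r_i\eta_i$ with $r_i\in\mathbb{Z}_4$ (explicitly, for $r=a+bu+cv+dw+euv+fuw+gvw+huvw$: $r_1=a$, $r_2=a+b$, $r_3=a+c$, $r_4=a+d$, $r_5=a+b+c+e$, $r_6=a+b+d+f$, $r_7=a+c+d+g$, $r_8=a+b+c+d+e+f+g+h$). The Lee weight on $\mathbb{Z}_4$ is $w_L(0)=0$, $w_L(1)=w_L(3)=1$, $w_L(2)=2$, and on $R$ it is $w_L(r)=\sum_{i=1}^8 w_L(r_i)\in\{0,\dots,16\}$.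 A linear code is an $R$-submodule of $R^n$, with dual $C^\perp$ taken w.r.t. $\langle\mathbf{x},\mathbf{y}\rangle=\sum_jx_jy_j$ in $R$. For $\mathbf{c}\in R^n$ and $0\le j\le 16$, $n_j(\mathbf{c})$ is the number of coordinates of $\mathbf{c}$ of Lee weight $j$, and $SLWE_C(X_0,\dots,X_{16})=\sum_{\mathbf{c}\in C}\prod_{j=0}^{16}X_j^{n_j(\mathbf{c})}$. *)

theory Defs
  imports "HOL-Library.Numeral_Type" "HOL-Computational_Algebra.Polynomial"
begin

text \<open>Z4 is the numeral type 4. An element of R = Z4[u,v,w]/(u^2-u,v^2-v,w^2-w) is
  represented by its coefficients w.r.t. the Z4-basis of squarefree monomials
  u^a v^b w^c, the monomial being indexed by (a,b,c) :: bool*bool*bool.\<close>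

type_synonym z4 = 4
type_synonym mono = "bool \<times> bool \<times> bool"
type_synonym R = "mono \<Rightarrow> z4"

definition mono_mult :: "mono \<Rightarrow> mono \<Rightarrow> mono" where
  "mono_mult p q = (fst p \<or> fst q, fst (snd p) \<or> fst (snd q), snd (snd p) \<or> snd (snd q))"

definition R_zero :: R where "R_zero = (\<lambda>_. 0)"

definition R_add :: "R \<Rightarrow> R \<Rightarrow> R" where "R_add x y = (\<lambda>m. x m + y m)"

definition R_mult :: "R \<Rightarrow> R \<Rightarrow> R" where
  "R_mult x y = (\<lambda>m. \<Sum>p\<in>UNIV. \<Sum>q\<in>UNIV. if mono_mult p q = m then x p * y q else 0)"

text \<open>Component r_i of r at the idempotent eta_i: eta_i corresponds to the point
  p in {0,1}^3 (u,v,w evaluated), and r_i = sum of the coefficients of the monomials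
  dividing the monomial of p.\<close>

definition mono_le :: "mono \<Rightarrow> mono \<Rightarrow> bool" where
  "mono_le m p = ((fst m \<longrightarrow> fst p) \<and> (fst (snd m) \<longrightarrow> fst (snd p)) \<and> (snd (snd m) \<longrightarrow> snd (snd p)))"

definition R_comp :: "R \<Rightarrow> mono \<Rightarrow> z4" where
  "R_comp x p = (\<Sum>m\<in>{m. mono_le m p}. x m)"

definition lee_z4 :: "z4 \<Rightarrow> nat" where
  "lee_z4 a = (if a = 0 then 0 else if a = 2 then 2 else 1)"

definition lee_R :: "R \<Rightarrow> nat" where
  "lee_R x = (\<Sum>p\<in>UNIV. lee_z4 (R_comp x p))"

definition vecs :: "nat \<Rightarrow> (nat \<Rightarrow> R) set" where
  "vecs n = {x. \<forall>i\<ge>n. x i = R_zero}"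

definition linear_code :: "nat \<Rightarrow> (nat \<Rightarrow> R) set \<Rightarrow> bool" where
  "linear_code n C \<longleftrightarrow> C \<subseteq> vecs n \<and> (\<lambda>_. R_zero) \<in> C
     \<and> (\<forall>x\<in>C. \<forall>y\<in>C. (\<lambda>i. R_add (x i) (y i)) \<in> C)
     \<and> (\<forall>r. \<forall>x\<in>C. (\<lambda>i. R_mult r (x i)) \<in> C)"

definition R_inner :: "nat \<Rightarrow> (nat \<Rightarrow> R) \<Rightarrow> (nat \<Rightarrow> R) \<Rightarrow> R" where
  "R_inner n x y = (\<lambda>m. \<Sum>j<n. R_mult (x j) (y j) m)"

definition dual_code :: "nat \<Rightarrow> (nat \<Rightarrow> R) set \<Rightarrow> (nat \<Rightarrow> R) set" where
  "dual_code n C = {y \<in> vecs n. \<forall>x\<in>C. R_inner n x y = R_zero}"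

definition n_wt :: "nat \<Rightarrow> nat \<Rightarrow> (nat \<Rightarrow> R) \<Rightarrow> nat" where
  "n_wt n j c = card {i. i < n \<and> lee_R (c i) = j}"

definition SLWE :: "nat \<Rightarrow> (nat \<Rightarrow> R) set \<Rightarrow> (nat \<Rightarrow> 'a::comm_ring_1) \<Rightarrow> 'a" where
  "SLWE n C X = (\<Sum>c\<in>C. \<Prod>j\<le>16. X j ^ n_wt n j c)"

definition Kraw :: "nat \<Rightarrow> nat \<Rightarrow> int" where
  "Kraw j k = coeff ([:1, 1:] ^ (16 - k) * [:1, -1:] ^ k) j"

definition Bvar :: "(nat \<Rightarrow> 'a::comm_ring_1) \<Rightarrow> nat \<Rightarrow> 'a" where
  "Bvar X k = (\<Sum>j\<le>16. of_int (Kraw j k) * X j)"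

end

theory Submission
  imports Defs "HOL-Library.FuncSet"
begin

(* The component map r |-> (r_1, ..., r_8) is a ring isomorphism from R onto Z4^8, so
   psi(r) = i^(r_1 + ... + r_8) is a generating additive character of R, and character
   orthogonality gives  sum_{x in C} psi(<x,y>) = |C|  if y is in the dual code and 0 otherwise.
   For fixed x in R, the generating polynomial sum_a psi(x a) Y^(w_L a) factors over the eight
   components, the factor of the k-th one being (1+Y)^(2-w)(1-Y)^w with w = w_L(x_k); hence its
   coefficient of Y^j is the Krawtchouk coefficient K_j(w_L(x)).  Combining the two, for every
   pattern J of Lee weights, |C| times the number of dual codewords y with w_L(y_i) = J_i for all i
   equals sum_{x in C} prod_i K_{J_i}(w_L(x_i)).  This integer identity, obtained over the complex
   numbers, is finally summed against the monomials prod_i X_{J_i} in any field of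
   characteristic 0. *)

section \<open>The component isomorphism of R\<close>

lemma UNIV_4: "(UNIV :: 4 set) = {0, 1, 2, 3}"
proof -
  have "card {0, 1, 2, 3 :: 4} = CARD(4)" by simp
  then show ?thesis
    using card_subset_eq[OF finite_class.finite_UNIV subset_UNIV, of "{0, 1, 2, 3 :: 4}"] by simp
qed

lemma z4_cases: "(z :: 4) = 0 \<or> z = 1 \<or> z = 2 \<or> z = 3"
  using UNIV_4 by auto

definition mono_degree :: "mono \<Rightarrow> nat" where
  "mono_degree m = of_bool (fst m) + of_bool (fst (snd m)) + of_bool (snd (snd m))"

lemma mono_degree_less: "mono_le q m \<Longrightarrow> q \<noteq> m \<Longrightarrow> mono_degree q < mono_degree m"
  by (cases q; cases m) (auto simp: mono_le_def mono_degree_def)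

lemma card_UNIV_mono: "card (UNIV :: mono set) = 8"
  by (simp add: card_UNIV_bool)

lemma mono_le_refl: "mono_le m m"
  by (simp add: mono_le_def)

lemma mono_le_mono_mult_iff: "mono_le (mono_mult q r) p \<longleftrightarrow> mono_le q p \<and> mono_le r p"
  by (auto simp: mono_le_def mono_mult_def)

lemma R_comp_zero [simp]: "R_comp R_zero p = 0"
  by (simp add: R_comp_def R_zero_def)

lemma R_comp_add: "R_comp (R_add x y) p = R_comp x p + R_comp y p"
  unfolding R_comp_def R_add_def by (simp add: sum.distrib)

lemma R_comp_diff: "R_comp (\<lambda>m. x m - y m) p = R_comp x p - R_comp y p"
  unfolding R_comp_def by (simp add: sum_subtractf)

lemma R_comp_mult: "R_comp (R_mult x y) p = R_comp x p * R_comp y p"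
proof -
  have "R_comp (R_mult x y) p
      = (\<Sum>q\<in>UNIV. \<Sum>r\<in>UNIV. \<Sum>m\<in>{m. mono_le m p}. if mono_mult q r = m then x q * y r else 0)"
    unfolding R_comp_def R_mult_def by (subst sum.swap, rule sum.cong[OF refl], rule sum.swap)
  also have "\<dots> = (\<Sum>q\<in>UNIV. \<Sum>r\<in>UNIV.
      (if mono_le q p then x q else 0) * (if mono_le r p then y r else 0))"
    by (intro sum.cong refl) (simp add: sum.delta mono_le_mono_mult_iff)
  also have "\<dots> = R_comp x p * R_comp y p"
    unfolding R_comp_def by (simp add: sum_product[symmetric] sum.If_cases)
  finally show ?thesis .
qed

text \<open>R_comp is the zeta transform over the divisibility order of monomials; it is inverted
  by induction on the degree.\<close>

lemma R_comp_eq_0_imp_coeff_eq_0: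
  assumes "\<And>p. R_comp d p = 0"
  shows "d m = 0"
proof (induction "mono_degree m" arbitrary: m rule: less_induct)
  case less
  have "R_comp d m = d m + (\<Sum>q\<in>{q. mono_le q m} - {m}. d q)"
    unfolding R_comp_def by (subst sum.remove[of _ m]) (auto simp: mono_le_refl)
  also have "(\<Sum>q\<in>{q. mono_le q m} - {m}. d q) = 0"
    by (rule sum.neutral) (auto intro: less mono_degree_less)
  finally show ?case using assms by simp
qed

lemma inj_R_comp: "inj R_comp"
proof (rule injI)
  fix x y assume "R_comp x = R_comp y"
  then have "R_comp (\<lambda>m. x m - y m) p = 0" for p
    by (simp add: R_comp_diff)
  then have "x m - y m = 0" for m
    by (rule R_comp_eq_0_imp_coeff_eq_0)
  then show "x = y" by auto
qed

lemma bij_R_comp: "bij R_comp"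
  using inj_R_comp by (simp add: bij_def finite_UNIV_inj_surj)

lemma R_eq_zero_iff_comp: "s = R_zero \<longleftrightarrow> (\<forall>p. R_comp s p = 0)"
proof
  assume "\<forall>p. R_comp s p = 0"
  then have "R_comp s = R_comp R_zero" by auto
  then show "s = R_zero" using inj_R_comp by (simp add: inj_eq)
qed simp

lemma bij_betw_Collect_comp: "bij f \<Longrightarrow> bij_betw f {y. P (f y)} {b. P b}"
  unfolding bij_betw_def bij_def by (auto intro: inj_on_subset)

lemma R_comp_R_inner: "R_comp (R_inner n x y) p = (\<Sum>j<n. R_comp (x j) p * R_comp (y j) p)"
  unfolding R_comp_def R_inner_def by (subst sum.swap) (simp add: R_comp_def[symmetric] R_comp_mult)

section \<open>A generating character of R\<close>

definition z4_char :: "4 \<Rightarrow> complex" where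
  "z4_char z = (if z = 0 then 1 else if z = 1 then \<i> else if z = 2 then -1 else -\<i>)"

lemma z4_char_0 [simp]: "z4_char 0 = 1"
  by (simp add: z4_char_def)

lemma z4_char_add: "z4_char (a + b) = z4_char a * z4_char b"
  using z4_cases[of a] z4_cases[of b] by (auto simp: z4_char_def)

lemma z4_char_eq_1_iff: "z4_char z = 1 \<longleftrightarrow> z = 0"
  using z4_cases[of z] by (auto simp: z4_char_def complex_eq_iff)

lemma z4_char_sum: "finite A \<Longrightarrow> z4_char (\<Sum>x\<in>A. f x) = (\<Prod>x\<in>A. z4_char (f x))"
  by (induction A rule: finite_induct) (auto simp: z4_char_add)

definition R_trace :: "R \<Rightarrow> 4" where
  "R_trace x = (\<Sum>p\<in>UNIV. R_comp x p)"

lemma R_trace_R_inner: "R_trace (R_inner n x y) = (\<Sum>j<n. R_trace (R_mult (x j) (y j)))"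
  unfolding R_trace_def R_comp_R_inner R_comp_mult by (rule sum.swap)

lemma R_trace_R_inner_add_left:
  "R_trace (R_inner n (\<lambda>i. R_add (x i) (z i)) y) = R_trace (R_inner n x y) + R_trace (R_inner n z y)"
  unfolding R_trace_def R_comp_R_inner R_comp_add by (simp add: algebra_simps sum.distrib)

lemma bij_betw_extend_vecs:
  "bij_betw (\<lambda>f i. if i < n then f i else R_zero) (PiE {..<n} F) {y \<in> vecs n. \<forall>i<n. y i \<in> F i}"
  by (rule bij_betw_byWitness[where f' = "\<lambda>y. restrict y {..<n}"])
     (auto simp: vecs_def PiE_def extensional_def fun_eq_iff)

lemma finite_vecs: "finite (vecs n)"
  using bij_betw_finite[OF bij_betw_extend_vecs[of n "\<lambda>_. UNIV"]] by (simp add: finite_PiE)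

lemma linear_code_finite: "linear_code n C \<Longrightarrow> finite C"
  using finite_vecs finite_subset unfolding linear_code_def by blast

lemma linear_code_card_pos: "linear_code n C \<Longrightarrow> card C > 0"
  using linear_code_finite unfolding linear_code_def by (auto simp: card_gt_0_iff)

text \<open>If y is not dual to C, some codeword x1 has a nontrivial character value at its inner
  product with y (scale a witness by the idempotent picking a nonzero component); translating C by
  x1 multiplies the character sum by that value, so the sum vanishes.\<close>

lemma sum_char_inner_linear_code:
  assumes lin: "linear_code n C" and y: "y \<in> vecs n"
  shows "(\<Sum>x\<in>C. z4_char (R_trace (R_inner n x y)))
       = (if y \<in> dual_code n C then of_nat (card C) else 0)"
proof (cases "y \<in> dual_code n C")
  case True
  then have "R_trace (R_inner n x y) = 0" if "x \<in> C" for x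
    using that by (auto simp: dual_code_def R_trace_def)
  then show ?thesis using True by simp
next
  case False
  let ?T = "\<lambda>x. R_trace (R_inner n x y)"
  obtain x0 where x0: "x0 \<in> C" "R_inner n x0 y \<noteq> R_zero"
    using False y by (auto simp: dual_code_def)
  then obtain p where p: "R_comp (R_inner n x0 y) p \<noteq> 0"
    using R_eq_zero_iff_comp by blast
  obtain r where r: "R_comp r = (\<lambda>q. if q = p then 1 else 0)"
    using bij_R_comp by (metis bij_pointE)
  define x1 where "x1 = (\<lambda>i. R_mult r (x0 i))"
  have x1: "x1 \<in> C"
    using lin x0 unfolding linear_code_def x1_def by blast
  have "?T x1 = (\<Sum>q\<in>UNIV. R_comp r q * R_comp (R_inner n x0 y) q)"
    unfolding R_trace_def R_comp_R_inner x1_def R_comp_mult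
    by (simp add: sum_distrib_left mult.assoc)
  also have "\<dots> = R_comp (R_inner n x0 y) p"
    by (simp add: r if_distrib[of "\<lambda>z. z * _"] cong: if_cong)
  finally have char_x1: "z4_char (?T x1) \<noteq> 1"
    using p z4_char_eq_1_iff by simp
  define translate where "translate = (\<lambda>x i. R_add (x i) (x1 i))"
  have into: "translate ` C \<subseteq> C"
    using lin x1 unfolding linear_code_def translate_def by blast
  have inj: "inj_on translate C"
    by (rule inj_onI) (auto simp: translate_def R_add_def fun_eq_iff)
  have "(\<Sum>x\<in>C. z4_char (?T x)) = (\<Sum>x\<in>translate ` C. z4_char (?T x))"
    by (simp add: endo_inj_surj[OF linear_code_finite[OF lin] into inj])
  also have "\<dots> = (\<Sum>x\<in>C. z4_char (?T (translate x)))"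
    by (simp add: sum.reindex[OF inj])
  also have "\<dots> = z4_char (?T x1) * (\<Sum>x\<in>C. z4_char (?T x))"
    unfolding translate_def R_trace_R_inner_add_left z4_char_add
    by (simp add: sum_distrib_left mult.commute)
  finally have "(1 - z4_char (?T x1)) * (\<Sum>x\<in>C. z4_char (?T x)) = 0"
    by (simp add: algebra_simps)
  then show ?thesis using False char_x1 by simp
qed

section \<open>The local Krawtchouk identity\<close>

definition char_lee_poly :: "4 \<Rightarrow> complex poly" where
  "char_lee_poly a = (\<Sum>c\<in>UNIV. monom (z4_char (a * c)) (lee_z4 c))"

lemma lee_z4_le_2: "lee_z4 a \<le> 2"
  by (simp add: lee_z4_def)

lemma char_lee_poly_eq: "char_lee_poly a = [:1, 1:] ^ (2 - lee_z4 a) * [:1, -1:] ^ lee_z4 a"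
proof -
  have "char_lee_poly a = [:z4_char 0, z4_char a + z4_char (3 * a), z4_char (2 * a):]"
    unfolding char_lee_poly_def UNIV_4
    by (simp add: lee_z4_def monom_Suc monom_0 numeral_2_eq_2 one_pCons mult.commute)
  then show ?thesis
    using z4_cases[of a] by (auto simp: z4_char_def lee_z4_def power2_eq_square)
qed

lemma prod_monom: "finite A \<Longrightarrow> (\<Prod>x\<in>A. monom (f x) (g x)) = monom (\<Prod>x\<in>A. f x) (\<Sum>x\<in>A. g x)"
  by (induction A rule: finite_induct) (auto simp: mult_monom)

lemma coeff_prod_char_lee_poly:
  "coeff (\<Prod>p\<in>UNIV. char_lee_poly (a p)) j
     = (\<Sum>b\<in>{b :: mono \<Rightarrow> 4. (\<Sum>p\<in>UNIV. lee_z4 (b p)) = j}. z4_char (\<Sum>p\<in>UNIV. a p * b p))"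
proof -
  have "(\<Prod>p\<in>UNIV. char_lee_poly (a p))
      = (\<Sum>b\<in>UNIV. monom (\<Prod>p\<in>UNIV. z4_char (a p * b p)) (\<Sum>p\<in>UNIV. lee_z4 (b p)))"
    unfolding char_lee_poly_def by (subst prod_sum_PiE) (auto simp: prod_monom)
  then show ?thesis
    by (simp add: coeff_sum coeff_monom sum.If_cases z4_char_sum)
qed

lemma prod_char_lee_poly:
  fixes a :: "mono \<Rightarrow> 4"
  shows "(\<Prod>p\<in>UNIV. char_lee_poly (a p))
     = [:1, 1:] ^ (16 - (\<Sum>p\<in>UNIV. lee_z4 (a p))) * [:1, -1:] ^ (\<Sum>p\<in>UNIV. lee_z4 (a p))"
proof -
  have "(\<Sum>p\<in>UNIV. 2 - lee_z4 (a p)) + (\<Sum>p\<in>UNIV. lee_z4 (a p)) = (\<Sum>p\<in>(UNIV :: mono set). 2)"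
    using lee_z4_le_2 by (simp add: sum.distrib[symmetric])
  then have "(\<Sum>p\<in>UNIV. 2 - lee_z4 (a p)) = 16 - (\<Sum>p\<in>UNIV. lee_z4 (a p))"
    by (simp add: card_UNIV_mono)
  moreover have "(\<Prod>p\<in>UNIV. char_lee_poly (a p))
      = [:1, 1:] ^ (\<Sum>p\<in>UNIV. 2 - lee_z4 (a p)) * [:1, -1:] ^ (\<Sum>p\<in>UNIV. lee_z4 (a p))"
    by (simp add: char_lee_poly_eq prod.distrib power_sum)
  ultimately show ?thesis
    by simp
qed

lemma map_poly_of_int_mult:
  "map_poly (of_int :: int \<Rightarrow> 'b :: comm_ring_1) (p * q) = map_poly of_int p * map_poly of_int q"
  by (rule poly_eqI) (simp add: coeff_map_poly coeff_mult of_int_sum)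

lemma map_poly_of_int_power:
  "map_poly (of_int :: int \<Rightarrow> 'b :: comm_ring_1) (p ^ k) = map_poly of_int p ^ k"
  by (induction k) (simp_all add: map_poly_of_int_mult)

lemma of_int_Kraw: "of_int (Kraw j k) = coeff ([:1, 1:] ^ (16 - k) * [:1, -1:] ^ k :: complex poly) j"
proof -
  have "map_poly of_int ([:1, 1:] ^ (16 - k) * [:1, -1:] ^ k :: int poly)
      = ([:1, 1:] ^ (16 - k) * [:1, -1:] ^ k :: complex poly)"
    by (simp add: map_poly_of_int_mult map_poly_of_int_power map_poly_pCons)
  then show ?thesis
    unfolding Kraw_def by (metis coeff_map_poly of_int_0)
qed

lemma sum_char_lee_sphere_eq_Kraw:
  "(\<Sum>y\<in>{y. lee_R y = j}. z4_char (R_trace (R_mult x y))) = of_int (Kraw j (lee_R x))"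
proof -
  have "(\<Sum>y\<in>{y. lee_R y = j}. z4_char (R_trace (R_mult x y)))
      = (\<Sum>y\<in>{y. (\<Sum>p\<in>UNIV. lee_z4 (R_comp y p)) = j}. z4_char (\<Sum>p\<in>UNIV. R_comp x p * R_comp y p))"
    unfolding lee_R_def R_trace_def by (simp add: R_comp_mult)
  also have "\<dots> = (\<Sum>b\<in>{b. (\<Sum>p\<in>UNIV. lee_z4 (b p)) = j}. z4_char (\<Sum>p\<in>UNIV. R_comp x p * b p))"
    by (rule sum.reindex_bij_betw[OF bij_betw_Collect_comp[OF bij_R_comp]])
  also have "\<dots> = of_int (Kraw j (lee_R x))"
    unfolding coeff_prod_char_lee_poly[symmetric] prod_char_lee_poly of_int_Kraw lee_R_def ..
  finally show ?thesis .
qed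

section \<open>MacWilliams identity for a single weight pattern\<close>

definition pattern_count :: "nat \<Rightarrow> (nat \<Rightarrow> R) set \<Rightarrow> (nat \<Rightarrow> nat) \<Rightarrow> nat" where
  "pattern_count n D J = card {y \<in> D. \<forall>i<n. lee_R (y i) = J i}"

lemma prod_sum_eq_sum_vecs:
  fixes g :: "nat \<Rightarrow> R \<Rightarrow> 'a :: comm_semiring_1"
  shows "(\<Prod>i<n. \<Sum>a\<in>F i. g i a) = (\<Sum>y\<in>{y \<in> vecs n. \<forall>i<n. y i \<in> F i}. \<Prod>i<n. g i (y i))"
proof -
  have "(\<Prod>i<n. \<Sum>a\<in>F i. g i a) = (\<Sum>f\<in>PiE {..<n} F. \<Prod>i<n. g i (f i))"
    by (rule prod_sum_PiE) auto
  also have "\<dots> = (\<Sum>f\<in>PiE {..<n} F. \<Prod>i<n. g i (if i < n then f i else R_zero))"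
    by (intro sum.cong prod.cong) auto
  also have "\<dots> = (\<Sum>y\<in>{y \<in> vecs n. \<forall>i<n. y i \<in> F i}. \<Prod>i<n. g i (y i))"
    by (rule sum.reindex_bij_betw[OF bij_betw_extend_vecs])
  finally show ?thesis .
qed

lemma card_mult_pattern_count_dual_complex:
  assumes lin: "linear_code n C"
  shows "of_nat (card C * pattern_count n (dual_code n C) J)
       = (\<Sum>x\<in>C. \<Prod>i<n. (of_int (Kraw (J i) (lee_R (x i))) :: complex))"
proof -
  define S where "S = {y \<in> vecs n. \<forall>i<n. y i \<in> {a. lee_R a = J i}}"
  have "(\<Sum>x\<in>C. \<Prod>i<n. (of_int (Kraw (J i) (lee_R (x i))) :: complex))
      = (\<Sum>x\<in>C. \<Prod>i<n. \<Sum>a\<in>{a. lee_R a = J i}. z4_char (R_trace (R_mult (x i) a)))"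
    by (simp add: sum_char_lee_sphere_eq_Kraw)
  also have "\<dots> = (\<Sum>x\<in>C. \<Sum>y\<in>S. z4_char (R_trace (R_inner n x y)))"
    unfolding S_def prod_sum_eq_sum_vecs by (simp add: R_trace_R_inner z4_char_sum)
  also have "\<dots> = (\<Sum>y\<in>S. if y \<in> dual_code n C then of_nat (card C) else 0)"
    by (subst sum.swap) (simp add: S_def sum_char_inner_linear_code[OF lin])
  also have "\<dots> = of_nat (card {y \<in> S. y \<in> dual_code n C} * card C)"
    using finite_vecs[of n] by (simp add: sum.If_cases S_def Int_def)
  also have "{y \<in> S. y \<in> dual_code n C} = {y \<in> dual_code n C. \<forall>i<n. lee_R (y i) = J i}"
    by (auto simp: S_def dual_code_def)
  finally show ?thesis
    by (simp add: pattern_count_def mult.commute)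
qed

lemma card_mult_pattern_count_dual:
  assumes "linear_code n C"
  shows "int (card C * pattern_count n (dual_code n C) J) = (\<Sum>x\<in>C. \<Prod>i<n. Kraw (J i) (lee_R (x i)))"
proof -
  have "(of_int (int (card C * pattern_count n (dual_code n C) J)) :: complex)
      = of_int (\<Sum>x\<in>C. \<Prod>i<n. Kraw (J i) (lee_R (x i)))"
    using card_mult_pattern_count_dual_complex[OF assms] by simp
  then show ?thesis
    by (simp only: of_int_eq_iff)
qed

definition weight_patterns :: "nat \<Rightarrow> (nat \<Rightarrow> nat) set" where
  "weight_patterns n = PiE {..<n} (\<lambda>_. {..16})"

lemma lee_R_le_16: "lee_R x \<le> 16"
proof -
  have "lee_R x \<le> of_nat (card (UNIV :: mono set)) * 2"
    unfolding lee_R_def by (rule sum_bounded_above) (simp add: lee_z4_le_2)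
  then show ?thesis by (simp add: card_UNIV_mono)
qed

lemma prod_power_card_fibers:
  fixes f :: "nat \<Rightarrow> nat" and X :: "nat \<Rightarrow> 'a :: comm_monoid_mult"
  assumes "\<forall>i<n. f i \<le> m"
  shows "(\<Prod>j\<le>m. X j ^ card {i. i < n \<and> f i = j}) = (\<Prod>i<n. X (f i))"
  using assms
proof (induction n)
  case (Suc n)
  have "card {i. i < Suc n \<and> f i = j} = card {i. i < n \<and> f i = j} + of_bool (f n = j)" for j
  proof -
    have "{i. i < Suc n \<and> f i = j}
        = (if f n = j then insert n {i. i < n \<and> f i = j} else {i. i < n \<and> f i = j})"
      by (auto simp: less_Suc_eq)
    then show ?thesis by simp
  qed
  then have "(\<Prod>j\<le>m. X j ^ card {i. i < Suc n \<and> f i = j})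
      = (\<Prod>j\<le>m. X j ^ card {i. i < n \<and> f i = j}) * (\<Prod>j\<le>m. X j ^ of_bool (f n = j))"
    by (simp add: power_add prod.distrib)
  also have "(\<Prod>j\<le>m. X j ^ of_bool (f n = j)) = (\<Prod>j\<le>m. if f n = j then X j else 1)"
    by (rule prod.cong) auto
  also have "(\<Prod>j\<le>m. if f n = j then X j else 1) = X (f n)"
    using Suc.prems by (simp add: prod.delta)
  finally show ?case using Suc by simp
qed simp

lemma SLWE_eq_sum_prod: "SLWE n D X = (\<Sum>c\<in>D. \<Prod>i<n. X (lee_R (c i)))"
  unfolding SLWE_def n_wt_def by (intro sum.cong refl prod_power_card_fibers) (simp add: lee_R_le_16)

lemma restrict_eq_iff: "J \<in> PiE A B \<Longrightarrow> restrict f A = J \<longleftrightarrow> (\<forall>i\<in>A. f i = J i)"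
  by (auto simp: PiE_def extensional_def fun_eq_iff)

lemma SLWE_eq_sum_weight_patterns:
  assumes "finite D"
  shows "SLWE n D X = (\<Sum>J\<in>weight_patterns n. of_nat (pattern_count n D J) * (\<Prod>i<n. X (J i)))"
proof -
  have "SLWE n D X = (\<Sum>J\<in>weight_patterns n.
      \<Sum>y\<in>{y. y \<in> D \<and> restrict (\<lambda>i. lee_R (y i)) {..<n} = J}. \<Prod>i<n. X (lee_R (y i)))"
    unfolding SLWE_eq_sum_prod weight_patterns_def
    by (rule sum.group[symmetric, OF assms])
      (simp_all add: finite_PiE image_subset_iff restrict_PiE_iff lee_R_le_16 del: restrict_PiE)
  also have "\<dots> = (\<Sum>J\<in>weight_patterns n. \<Sum>y\<in>{y \<in> D. \<forall>i<n. lee_R (y i) = J i}. \<Prod>i<n. X (J i))"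
    by (intro sum.cong refl) (auto simp: weight_patterns_def restrict_eq_iff)
  finally show ?thesis
    by (simp add: pattern_count_def)
qed

lemma SLWE_Bvar_eq_sum_weight_patterns:
  "SLWE n C (Bvar X)
     = (\<Sum>J\<in>weight_patterns n. of_int (\<Sum>x\<in>C. \<Prod>i<n. Kraw (J i) (lee_R (x i))) * (\<Prod>i<n. X (J i)))"
proof -
  have "SLWE n C (Bvar X) = (\<Sum>x\<in>C. \<Prod>i<n. \<Sum>j\<le>16. of_int (Kraw j (lee_R (x i))) * X j)"
    by (simp add: SLWE_eq_sum_prod Bvar_def)
  also have "\<dots> = (\<Sum>x\<in>C. \<Sum>J\<in>weight_patterns n. \<Prod>i<n. of_int (Kraw (J i) (lee_R (x i))) * X (J i))"
    unfolding weight_patterns_def by (intro sum.cong refl prod_sum_PiE) auto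
  also have "\<dots> = (\<Sum>J\<in>weight_patterns n. of_int (\<Sum>x\<in>C. \<Prod>i<n. Kraw (J i) (lee_R (x i))) * (\<Prod>i<n. X (J i)))"
    by (subst sum.swap) (simp add: prod.distrib sum_distrib_right of_int_sum of_int_prod)
  finally show ?thesis .
qed

theorem mainTheorem5:
  fixes n :: nat and C :: "(nat \<Rightarrow> R) set" and X :: "nat \<Rightarrow> 'a::field_char_0"
  assumes "linear_code n C"
  shows "SLWE n (dual_code n C) X = SLWE n C (Bvar X) / of_nat (card C)"
proof -
  have fin: "finite (dual_code n C)"
    using finite_vecs[of n] by (simp add: dual_code_def)
  have "of_nat (card C) * SLWE n (dual_code n C) X = SLWE n C (Bvar X)"
    unfolding SLWE_eq_sum_weight_patterns[OF fin]
      SLWE_Bvar_eq_sum_weight_patterns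
      card_mult_pattern_count_dual[OF assms, symmetric]
    by (simp add: sum_distrib_left mult.assoc)
  moreover have "(of_nat (card C) :: 'a) \<noteq> 0"
    using linear_code_card_pos[OF assms] by simp
  ultimately show ?thesis
    by (simp add: field_simps)
qed

end
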